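(* Let $G$ be an infinite locally finite connected graph and $(F_i)_{i=1}^\infty$ a sequence of finite connected subgraphs of $G$ such that, for all $i\ge1$, $F_i\le F_{i+1}$ and $N_G(F_i)\subseteq V(F_{i+1})$. Set $F=\bigcup_{i=1}^\infty F_i$. Suppose that for every $i\ge1$ and every component $H$ of $G-V(F_{i+1})$ there is a component $D$ of $F_{i+1}-V(F_i)$ with $N_G(H)\subseteq V(D)$. Then $F$ is a spanning subgraph of $G$ that is faithful to $G$.
   Context: For $X\subseteq V(G)$, $N_G(X)=\bigcup_{v\in X}N_G(v)\setminus X$; for a subgraph $H$, $N_G(H)=N_G(V(H))$. A ray is a one-way infinite path; two rays of a graph $H$ are equivalent in $H$ if for every finite $S\subseteq V(H)$ some component of $H-S$ contains tails of both; the classes are the ends of $H$. A subgraph $F$ of $G$ is faithful to $G$ if (i) every end of $G$ contains a ray of $F$, and (ii) any two rays of $F$ are equivalent in $F$ if and only if they are equivalent in $G$. *)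

theory Defs
  imports Main
begin

type_synonym 'a graph = "'a set \<times> 'a set set"

definition verts :: "'a graph \<Rightarrow> 'a set" where "verts G = fst G"
definition edges :: "'a graph \<Rightarrow> 'a set set" where "edges G = snd G"

definition graph :: "'a graph \<Rightarrow> bool" where
  "graph G \<longleftrightarrow> (\<forall>e\<in>edges G. \<exists>u v. u \<noteq> v \<and> u \<in> verts G \<and> v \<in> verts G \<and> e = {u, v})"

definition adj :: "'a graph \<Rightarrow> 'a \<Rightarrow> 'a \<Rightarrow> bool" where
  "adj G u v \<longleftrightarrow> {u, v} \<in> edges G"

definition subgraph :: "'a graph \<Rightarrow> 'a graph \<Rightarrow> bool" where
  "subgraph H G \<longleftrightarrow> graph H \<and> verts H \<subseteq> verts G \<and> edges H \<subseteq> edges G"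

definition spanning_subgraph :: "'a graph \<Rightarrow> 'a graph \<Rightarrow> bool" where
  "spanning_subgraph H G \<longleftrightarrow> subgraph H G \<and> verts H = verts G"

definition locally_finite :: "'a graph \<Rightarrow> bool" where
  "locally_finite G \<longleftrightarrow> (\<forall>v\<in>verts G. finite {w. adj G v w})"

definition finite_graph :: "'a graph \<Rightarrow> bool" where
  "finite_graph G \<longleftrightarrow> finite (verts G) \<and> finite (edges G)"

definition connected_graph :: "'a graph \<Rightarrow> bool" where
  "connected_graph G \<longleftrightarrow> verts G \<noteq> {} \<and> (\<forall>u\<in>verts G. \<forall>v\<in>verts G. (adj G)\<^sup>*\<^sup>* u v)"

definition nbhd :: "'a graph \<Rightarrow> 'a set \<Rightarrow> 'a set" where
  "nbhd G X = {w. \<exists>v\<in>X. adj G v w} - X"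

definition del_verts :: "'a graph \<Rightarrow> 'a set \<Rightarrow> 'a graph" where
  "del_verts G X = (verts G - X, {e \<in> edges G. e \<inter> X = {}})"

text \<open>Components: maximal connected subgraphs, i.e. the subgraph induced on the
set of vertices reachable from some vertex.\<close>
definition component :: "'a graph \<Rightarrow> 'a graph \<Rightarrow> bool" where
  "component G H \<longleftrightarrow> (\<exists>v\<in>verts G. verts H = {w. (adj G)\<^sup>*\<^sup>* v w}
      \<and> edges H = {e \<in> edges G. e \<subseteq> verts H})"

definition graph_Union :: "(nat \<Rightarrow> 'a graph) \<Rightarrow> 'a graph" where
  "graph_Union F = ((\<Union>i. verts (F i)), (\<Union>i. edges (F i)))"

definition ray :: "'a graph \<Rightarrow> (nat \<Rightarrow> 'a) \<Rightarrow> bool" where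
  "ray H r \<longleftrightarrow> inj r \<and> (\<forall>n. r n \<in> verts H) \<and> (\<forall>n. adj H (r n) (r (Suc n)))"

definition ray_equiv :: "'a graph \<Rightarrow> (nat \<Rightarrow> 'a) \<Rightarrow> (nat \<Rightarrow> 'a) \<Rightarrow> bool" where
  "ray_equiv H r s \<longleftrightarrow> (\<forall>S. finite S \<and> S \<subseteq> verts H \<longrightarrow>
     (\<exists>C. component (del_verts H S) C \<and>
        (\<exists>k. \<forall>n\<ge>k. r n \<in> verts C \<and> s n \<in> verts C \<and>
                    {r n, r (Suc n)} \<in> edges C \<and> {s n, s (Suc n)} \<in> edges C)))"

text \<open>Faithful subgraph: every end of \<open>G\<close> (the class of some ray of \<open>G\<close>) contains
a ray of \<open>F\<close>, and rays of \<open>F\<close> are equivalent in \<open>F\<close> iff equivalent in \<open>G\<close>.\<close>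
definition faithful :: "'a graph \<Rightarrow> 'a graph \<Rightarrow> bool" where
  "faithful F G \<longleftrightarrow> subgraph F G \<and>
     (\<forall>r. ray G r \<longrightarrow> (\<exists>s. ray F s \<and> ray_equiv G r s)) \<and>
     (\<forall>r s. ray F r \<longrightarrow> ray F s \<longrightarrow> (ray_equiv F r s \<longleftrightarrow> ray_equiv G r s))"

end

theory Submission
  imports Defs "HOL-Library.Stream"
begin

(* A vertex of G is reached from F_1 by a path of G, and a path can only leave F_i through
   N(F_i), which lies in F_(i+1); so F spans G, and rays equivalent in F are equivalent in G.
   Conversely, a finite S lies in some F_i. Tails of two rays of F that are equivalent in G lie
   in one component H of G - F_(i+1), every vertex of H reaches N(H) inside F - S, and N(H) lies
   in a component D of F_(i+1) - F_i, which is connected and avoids S.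
   Finally, given a ray r of G let H_i be the component of G - F_(i+1) containing a tail of r.
   The H_i are nested, and a vertex x_i of N(H_i) lies in D_i, between F_i and F_(i+1). Joining
   x_(i+1) to x_(i+2) by a path of F inside H_i and concatenating these paths gives a walk of F
   which eventually stays in every H_i, hence visits every vertex only finitely often; cutting
   out its cycles leaves a ray of F equivalent to r. *)

section \<open>Paths and walks\<close>

lemma rtranclp_exit:
  assumes "Q\<^sup>*\<^sup>* u v" and "u \<in> X" and "v \<notin> X"
  shows "\<exists>a b. (\<lambda>x y. Q x y \<and> x \<in> X \<and> y \<in> X)\<^sup>*\<^sup>* u a \<and> a \<in> X \<and> Q a b \<and> b \<notin> X"
  using assms
proof (induction rule: converse_rtranclp_induct)
  case base
  then show ?case by simp
next
  case (step u w)
  show ?case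
  proof (cases "w \<in> X")
    case True
    then obtain a b where "(\<lambda>x y. Q x y \<and> x \<in> X \<and> y \<in> X)\<^sup>*\<^sup>* w a" "a \<in> X" "Q a b" "b \<notin> X"
      using step by blast
    then show ?thesis
      using step True by (blast intro: converse_rtranclp_into_rtranclp)
  next
    case False
    then show ?thesis using step by blast
  qed
qed

lemma tranclp_imp_successively:
  assumes "R\<^sup>+\<^sup>+ a b"
  shows "\<exists>l. l \<noteq> [] \<and> hd l = a \<and> successively R (l @ [b])"
  using assms
proof (induction rule: tranclp_induct)
  case (base b)
  show ?case by (intro exI[of _ "[a]"]) (simp add: base)
next
  case (step b c)
  then obtain l where "l \<noteq> []" "hd l = a" "successively R (l @ [b])" by blast
  then show ?case
    using step(2) by (intro exI[of _ "l @ [b]"]) (simp add: successively_append_iff)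
qed

lemma successively_within_set:
  "successively (\<lambda>u v. Q u v \<and> u \<in> K \<and> v \<in> K) xs \<Longrightarrow> hd xs \<in> K \<Longrightarrow> set xs \<subseteq> K"
  by (induction xs rule: induct_list012) auto

lemma snth_flat_successively:
  assumes "\<And>n. ws !! n \<noteq> []" and "\<And>n. successively Q (ws !! n @ [hd (ws !! Suc n)])"
  shows "Q (flat ws !! n) (flat ws !! Suc n)"
  using assms
proof (induction n arbitrary: ws rule: less_induct)
  case (less n)
  let ?l = "shd ws"
  have flat_ws: "flat ws = ?l @- flat (stl ws)"
    using less.prems(1)[of 0] by (simp add: flat_unfold)
  show ?case
  proof (cases "n < length ?l")
    case True
    have "flat ws !! n = (?l @ [hd (ws !! 1)]) ! n"
      using True flat_ws by (simp add: nth_append)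
    moreover have "flat ws !! Suc n = (?l @ [hd (ws !! 1)]) ! Suc n"
    proof (cases "Suc n < length ?l")
      case True
      then show ?thesis by (simp only: flat_ws shift_snth_less) (simp add: nth_append)
    next
      case False
      then have "Suc n = length ?l" using \<open>n < length ?l\<close> by simp
      then show ?thesis using flat_ws less.prems(1)[of 1] by (simp add: flat_unfold)
    qed
    ultimately show ?thesis
      using successively_nth[OF less.prems(2)[of 0]] True by simp
  next
    case False
    let ?m = "n - length ?l"
    have "?m < n" using False less.prems(1)[of 0] by (cases ?l) auto
    moreover have "stl ws !! k \<noteq> []" "successively Q (stl ws !! k @ [hd (stl ws !! Suc k)])" for k
      using less.prems(1)[of "Suc k"] less.prems(2)[of "Suc k"] by simp_all
    ultimately have "Q (flat (stl ws) !! ?m) (flat (stl ws) !! Suc ?m)"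
      using less.IH by blast
    moreover have "length ?l \<le> n" using False by simp
    then have "flat ws !! n = flat (stl ws) !! ?m" "flat ws !! Suc n = flat (stl ws) !! Suc ?m"
      by (metis flat_ws shift_snth_ge le_SucI Suc_diff_le)+
    ultimately show ?thesis by simp
  qed
qed

lemma flat_stake_sdrop:
  assumes "\<And>n. ws !! n \<noteq> []"
  shows "flat ws = concat (stake j ws) @- flat (sdrop j ws)"
  using assms
proof (induction j arbitrary: ws)
  case 0
  show ?case by simp
next
  case (Suc j)
  have "flat ws = shd ws @- flat (stl ws)"
    using Suc.prems[of 0] by (simp add: flat_unfold)
  moreover have "stl ws !! n \<noteq> []" for n
    using Suc.prems[of "Suc n"] by simp
  then have "flat (stl ws) = concat (stake j (stl ws)) @- flat (sdrop j (stl ws))"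
    by (rule Suc.IH)
  ultimately show ?case by simp
qed

lemma snth_flat_eventually:
  assumes "\<And>n. ws !! n \<noteq> []"
  shows "\<exists>n0. \<forall>n\<ge>n0. \<exists>k\<ge>j. flat ws !! n \<in> set (ws !! k)"
proof -
  let ?n0 = "length (concat (stake j ws))"
  have "\<exists>k\<ge>j. flat ws !! n \<in> set (ws !! k)" if "?n0 \<le> n" for n
  proof -
    have "flat ws !! n \<in> sset (flat (sdrop j ws))"
      using that flat_stake_sdrop[OF assms, of j] by (simp add: sset_range)
    also have "\<dots> = (\<Union>m. set (ws !! (j + m)))"
      using assms by (subst sset_flat) (auto simp: sset_range sdrop_snth)
    finally show ?thesis using le_add1 by blast
  qed
  then show ?thesis by blast
qed

lemma walk_shortcut:
  assumes step: "\<And>n. Q (w n) (w (Suc n))" and finite_visits: "\<And>v. finite {n. w n = v}"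
  shows "\<exists>s. inj s \<and> (\<forall>k. Q (s k) (s (Suc k))) \<and> (\<forall>k. \<exists>n\<ge>k. s k = w n)"
proof -
  define last_visit where "last_visit n = Max {m. w m = w n}" for n
  have last_visit: "w (last_visit n) = w n" "n \<le> last_visit n" for n
    using Max_in[of "{m. w m = w n}"] Max_ge[of "{m. w m = w n}" n] finite_visits
    by (auto simp: last_visit_def)
  have last_visit_max: "m \<le> last_visit n" if "w m = w (last_visit n)" for m n
  proof -
    have "w m = w n" using that last_visit(1) by simp
    then show ?thesis using Max_ge[of "{m. w m = w n}" m] finite_visits by (simp add: last_visit_def)
  qed
  define p where "p = rec_nat (last_visit 0) (\<lambda>_ q. last_visit (Suc q))"
  have p_0: "p 0 = last_visit 0" and p_Suc: "p (Suc k) = last_visit (Suc (p k))" for k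
    by (simp_all add: p_def)
  have p_last: "w m = w (p k) \<Longrightarrow> m \<le> p k" for m k
    by (cases k) (simp_all add: p_0 p_Suc last_visit_max)
  have "strict_mono p"
    unfolding strict_mono_Suc_iff p_Suc using last_visit(2) Suc_le_lessD by blast
  then have p_less: "a < b \<Longrightarrow> p a < p b" and p_ge: "k \<le> p k" for a b k
    by (simp_all add: strict_mono_less strict_mono_imp_increasing)
  have "inj (w \<circ> p)"
    by (rule linorder_injI) (metis comp_apply leD p_last p_less)
  moreover have "Q ((w \<circ> p) k) ((w \<circ> p) (Suc k))" for k
    using step[of "p k"] last_visit(1)[of "Suc (p k)"] by (simp add: p_Suc)
  ultimately show ?thesis using p_ge by (metis comp_apply)
qed

section \<open>Components and equivalence of rays\<close>

lemma adj_commute: "adj G u v \<longleftrightarrow> adj G v u"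
  by (simp add: adj_def insert_commute)

lemma symp_adj: "symp (adj G)"
  by (simp add: symp_def adj_commute)

lemma verts_del_verts [simp]: "verts (del_verts G X) = verts G - X"
  by (simp add: del_verts_def verts_def)

lemma edges_del_verts [simp]: "edges (del_verts G X) = {e \<in> edges G. e \<inter> X = {}}"
  by (simp add: del_verts_def edges_def)

lemma adj_del_verts_iff: "adj (del_verts G X) u v \<longleftrightarrow> adj G u v \<and> u \<notin> X \<and> v \<notin> X"
  by (auto simp: adj_def)

lemma graph_adjD: "graph G \<Longrightarrow> adj G u v \<Longrightarrow> u \<in> verts G \<and> v \<in> verts G"
  unfolding graph_def adj_def by (fastforce simp: doubleton_eq_iff)

lemma graph_del_verts:
  assumes "graph G"
  shows "graph (del_verts G X)"
  unfolding graph_def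
proof
  fix e assume e: "e \<in> edges (del_verts G X)"
  then obtain u v where "u \<noteq> v" "u \<in> verts G" "v \<in> verts G" "e = {u, v}"
    using assms unfolding graph_def by auto
  then show "\<exists>u v. u \<noteq> v \<and> u \<in> verts (del_verts G X) \<and> v \<in> verts (del_verts G X) \<and> e = {u, v}"
    using e by auto
qed

lemma graph_rtranclp_adj_verts:
  assumes "graph G" and "(adj G)\<^sup>*\<^sup>* u v" and "u \<in> verts G"
  shows "v \<in> verts G"
  using assms(2,3) by (induction rule: rtranclp_induct) (auto dest: graph_adjD[OF assms(1)])

lemma subgraph_adj: "subgraph H G \<Longrightarrow> adj H u v \<Longrightarrow> adj G u v"
  by (auto simp: subgraph_def adj_def)

lemma nbhdI: "a \<in> X \<Longrightarrow> adj G a b \<Longrightarrow> b \<notin> X \<Longrightarrow> b \<in> nbhd G X"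
  unfolding nbhd_def by blast

definition component_at :: "'a graph \<Rightarrow> 'a \<Rightarrow> 'a graph" where
  "component_at H v = ({w. (adj H)\<^sup>*\<^sup>* v w}, {e \<in> edges H. e \<subseteq> {w. (adj H)\<^sup>*\<^sup>* v w}})"

lemma verts_component_at [simp]: "verts (component_at H v) = {w. (adj H)\<^sup>*\<^sup>* v w}"
  by (simp add: component_at_def verts_def)

lemma component_component_at: "v \<in> verts H \<Longrightarrow> component H (component_at H v)"
  unfolding component_def component_at_def verts_def edges_def by auto

lemma componentE:
  assumes "component H C"
  obtains v where "v \<in> verts H" "verts C = {w. (adj H)\<^sup>*\<^sup>* v w}"
    "edges C = {e \<in> edges H. e \<subseteq> verts C}"
  using assms unfolding component_def by blast

lemma component_verts_subset: "graph H \<Longrightarrow> component H C \<Longrightarrow> verts C \<subseteq> verts H"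
  by (metis componentE graph_rtranclp_adj_verts mem_Collect_eq subsetI)

lemma component_reach_closed:
  "component H C \<Longrightarrow> u \<in> verts C \<Longrightarrow> (adj H)\<^sup>*\<^sup>* u v \<Longrightarrow> v \<in> verts C"
  by (metis (mono_tags) componentE mem_Collect_eq rtranclp_trans)

lemma component_connected:
  assumes "component H C" "u \<in> verts C" "v \<in> verts C"
  shows "(adj H)\<^sup>*\<^sup>* u v"
proof -
  obtain w where "verts C = {x. (adj H)\<^sup>*\<^sup>* w x}" using assms(1) by (rule componentE)
  moreover have "symp (adj H)\<^sup>*\<^sup>*" by (rule symp_rtranclp[OF symp_adj])
  ultimately have "(adj H)\<^sup>*\<^sup>* u w" "(adj H)\<^sup>*\<^sup>* w v"
    using assms(2,3) by (auto dest: sympD)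
  then show ?thesis by (rule rtranclp_trans)
qed

lemma component_edgesI: "component H C \<Longrightarrow> e \<in> edges H \<Longrightarrow> e \<subseteq> verts C \<Longrightarrow> e \<in> edges C"
  by (metis (mono_tags, lifting) componentE mem_Collect_eq)

lemma component_rtranclp_within:
  assumes C: "component H C" and "(adj H)\<^sup>*\<^sup>* u v" and "u \<in> verts C"
  shows "(\<lambda>a b. adj H a b \<and> a \<in> verts C \<and> b \<in> verts C)\<^sup>*\<^sup>* u v"
  using assms(2)
proof (induction rule: rtranclp_induct)
  case (step y z)
  have "(adj H)\<^sup>*\<^sup>* u z" using step.hyps by (rule rtranclp.rtrancl_into_rtrancl)
  then have "y \<in> verts C" "z \<in> verts C"
    using component_reach_closed[OF C assms(3)] step.hyps(1) by auto
  then show ?case using step by (simp add: rtranclp.rtrancl_into_rtrancl)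
qed simp

lemma component_tail:
  assumes C: "component H C" and "r k \<in> verts C" and step: "\<And>n. k \<le> n \<Longrightarrow> adj H (r n) (r (Suc n))"
  shows "\<forall>n\<ge>k. r n \<in> verts C \<and> {r n, r (Suc n)} \<in> edges C"
proof -
  have verts: "r n \<in> verts C" if "k \<le> n" for n
    using that
  proof (induction n rule: dec_induct)
    case (step n)
    then show ?case using component_reach_closed[OF C] assms(3) by (meson r_into_rtranclp)
  qed (rule assms(2))
  have "{r n, r (Suc n)} \<in> edges C" if "k \<le> n" for n
    using component_edgesI[OF C] step[OF that] verts[OF that] verts[of "Suc n"] that
    by (simp add: adj_def)
  then show ?thesis using verts by blast
qed

lemma ray_eventually_avoids:
  assumes "ray H r" and "finite X"
  shows "\<exists>N. \<forall>n\<ge>N. r n \<notin> X"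
proof -
  have "finite (r -` X)" using assms by (intro finite_vimageI) (auto simp: ray_def)
  then obtain N where "\<forall>n\<in>r -` X. n < N" by (metis finite_nat_set_iff_bounded)
  then show ?thesis by (metis leD vimageI)
qed

lemma ray_subgraph: "subgraph H G \<Longrightarrow> ray H r \<Longrightarrow> ray G r"
  by (auto simp: ray_def subgraph_def adj_def)

lemma ray_equivD:
  assumes "ray_equiv H r s" and "finite S" and "S \<subseteq> verts H"
  shows "\<exists>k. (\<forall>n\<ge>k. r n \<notin> S \<and> s n \<notin> S) \<and> (adj (del_verts H S))\<^sup>*\<^sup>* (r k) (s k)"
proof -
  obtain C k where C: "component (del_verts H S) C"
    and tails: "\<forall>n\<ge>k. r n \<in> verts C \<and> s n \<in> verts C \<and>
                 {r n, r (Suc n)} \<in> edges C \<and> {s n, s (Suc n)} \<in> edges C"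
    using assms unfolding ray_equiv_def by blast
  have "edges C \<subseteq> edges (del_verts H S)" using C by (rule componentE) blast
  then have "\<forall>n\<ge>k. r n \<notin> S \<and> s n \<notin> S" using tails by fastforce
  moreover have "(adj (del_verts H S))\<^sup>*\<^sup>* (r k) (s k)"
    using component_connected[OF C] tails by blast
  ultimately show ?thesis by blast
qed

lemma ray_equivI:
  assumes r: "ray H r" and s: "ray H s"
    and connected_tails: "\<And>S. finite S \<Longrightarrow> S \<subseteq> verts H \<Longrightarrow>
      \<exists>k. (\<forall>n\<ge>k. r n \<notin> S \<and> s n \<notin> S) \<and> (adj (del_verts H S))\<^sup>*\<^sup>* (r k) (s k)"
  shows "ray_equiv H r s"
  unfolding ray_equiv_def
proof (intro allI impI)
  fix S assume "finite S \<and> S \<subseteq> verts H"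
  then obtain k where avoid: "\<forall>n\<ge>k. r n \<notin> S \<and> s n \<notin> S"
    and reach: "(adj (del_verts H S))\<^sup>*\<^sup>* (r k) (s k)"
    using connected_tails by blast
  let ?C = "component_at (del_verts H S) (r k)"
  have C: "component (del_verts H S) ?C"
    using r avoid by (intro component_component_at) (simp add: ray_def)
  have "\<forall>n\<ge>k. r n \<in> verts ?C \<and> {r n, r (Suc n)} \<in> edges ?C"
    using r avoid by (intro component_tail[OF C]) (simp_all add: ray_def adj_del_verts_iff)
  moreover have "\<forall>n\<ge>k. s n \<in> verts ?C \<and> {s n, s (Suc n)} \<in> edges ?C"
    using s avoid reach by (intro component_tail[OF C]) (simp_all add: ray_def adj_del_verts_iff)
  ultimately show "\<exists>C. component (del_verts H S) C \<and>
      (\<exists>k. \<forall>n\<ge>k. r n \<in> verts C \<and> s n \<in> verts C \<and>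
                  {r n, r (Suc n)} \<in> edges C \<and> {s n, s (Suc n)} \<in> edges C)"
    using C by blast
qed

lemma ray_equiv_spanning_subgraph:
  assumes H: "spanning_subgraph H G" and r: "ray H r" and s: "ray H s" and rs: "ray_equiv H r s"
  shows "ray_equiv G r s"
proof (rule ray_equivI)
  show "ray G r" "ray G s" using H r s by (auto simp: spanning_subgraph_def intro: ray_subgraph)
  fix S assume S: "finite S" "S \<subseteq> verts G"
  then have "S \<subseteq> verts H" using H by (simp add: spanning_subgraph_def)
  then obtain k where "\<forall>n\<ge>k. r n \<notin> S \<and> s n \<notin> S" "(adj (del_verts H S))\<^sup>*\<^sup>* (r k) (s k)"
    using ray_equivD[OF rs S(1)] by blast
  moreover have "adj (del_verts H S) u v \<Longrightarrow> adj (del_verts G S) u v" for u v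
    using H by (auto simp: adj_del_verts_iff spanning_subgraph_def intro: subgraph_adj)
  ultimately show "\<exists>k. (\<forall>n\<ge>k. r n \<notin> S \<and> s n \<notin> S) \<and> (adj (del_verts G S))\<^sup>*\<^sup>* (r k) (s k)"
    by (blast intro: mono_rtranclp[rule_format])
qed

lemma ray_of_walk:
  assumes "graph H" and "\<And>n. adj H (w n) (w (Suc n))" and "\<And>v. finite {n. w n = v}"
  shows "\<exists>s. ray H s \<and> (\<forall>k. \<exists>n\<ge>k. s k = w n)"
proof -
  obtain s where "inj s" "\<forall>k. adj H (s k) (s (Suc k))" "\<forall>k. \<exists>n\<ge>k. s k = w n"
    using walk_shortcut[of "adj H" w] assms(2,3) by blast
  then show ?thesis using graph_adjD[OF assms(1)] unfolding ray_def by blast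
qed

lemma verts_graph_Union: "verts (graph_Union F) = (\<Union>i. verts (F i))"
  by (simp add: graph_Union_def verts_def)

lemma edges_graph_Union: "edges (graph_Union F) = (\<Union>i. edges (F i))"
  by (simp add: graph_Union_def edges_def)

lemma adj_graph_Union: "adj (graph_Union F) u v \<longleftrightarrow> (\<exists>i. adj (F i) u v)"
  by (simp add: adj_def edges_graph_Union)

lemma subgraph_graph_Union:
  assumes "\<And>i. subgraph (F i) G"
  shows "subgraph (graph_Union F) G"
proof -
  have "graph (graph_Union F)"
    unfolding graph_def
  proof
    fix e assume "e \<in> edges (graph_Union F)"
    then obtain i where "e \<in> edges (F i)" by (auto simp: edges_graph_Union)
    moreover have "graph (F i)" using assms by (simp add: subgraph_def)
    ultimately obtain u v where "u \<noteq> v" "u \<in> verts (F i)" "v \<in> verts (F i)" "e = {u, v}"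
      unfolding graph_def by blast
    then show "\<exists>u v. u \<noteq> v \<and> u \<in> verts (graph_Union F) \<and> v \<in> verts (graph_Union F) \<and> e = {u, v}"
      by (auto simp: verts_graph_Union)
  qed
  then show ?thesis
    using assms by (auto simp: subgraph_def verts_graph_Union edges_graph_Union)
qed

lemma finite_subset_Union_mono:
  assumes "mono (A :: nat \<Rightarrow> 'a set)" and "finite S" and "S \<subseteq> (\<Union>i. A i)"
  shows "\<exists>i. S \<subseteq> A i"
  using assms(2,3)
proof (induction S rule: finite_induct)
  case (insert x S)
  then obtain i j where "S \<subseteq> A i" "x \<in> A j" by blast
  then have "insert x S \<subseteq> A (max i j)"
    using monoD[OF assms(1), of i "max i j"] monoD[OF assms(1), of j "max i j"] by auto
  then show ?case by blast
qed simp

section \<open>Exhausting sequences of finite connected subgraphs\<close>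

locale exhausting_sequence =
  fixes G :: "'a graph" and F :: "nat \<Rightarrow> 'a graph"
  assumes graph_G: "graph G" and connected_G: "connected_graph G"
    and subgraph_F: "\<And>i. subgraph (F i) G" and finite_F: "\<And>i. finite_graph (F i)"
    and connected_F: "\<And>i. connected_graph (F i)"
    and subgraph_F_Suc: "\<And>i. subgraph (F i) (F (Suc i))"
    and nbhd_F: "\<And>i. nbhd G (verts (F i)) \<subseteq> verts (F (Suc i))"
    and nbhd_component: "\<And>i H. component (del_verts G (verts (F (Suc i)))) H \<Longrightarrow>
      \<exists>D. component (del_verts (F (Suc i)) (verts (F i))) D \<and> nbhd G (verts H) \<subseteq> verts D"
begin

abbreviation V :: "nat \<Rightarrow> 'a set" where "V i \<equiv> verts (F i)"
abbreviation UF :: "'a graph" where "UF \<equiv> graph_Union F"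

lemma mono_V: "mono V"
  using subgraph_F_Suc by (simp add: mono_iff_le_Suc subgraph_def)

lemma V_Suc: "V i \<subseteq> V (Suc i)"
  using subgraph_F_Suc by (simp add: subgraph_def)

lemma finite_V: "finite (V i)"
  using finite_F by (simp add: finite_graph_def)

lemma V_nonempty: "V i \<noteq> {}"
  using connected_F by (simp add: connected_graph_def)

lemma V_subset: "V i \<subseteq> verts G"
  using subgraph_F by (simp add: subgraph_def)

lemma graph_F: "graph (F i)"
  using subgraph_F by (simp add: subgraph_def)

lemma F_connected: "u \<in> V i \<Longrightarrow> v \<in> V i \<Longrightarrow> (adj (F i))\<^sup>*\<^sup>* u v"
  using connected_F by (simp add: connected_graph_def)

lemma adj_F_UF: "adj (F i) u v \<Longrightarrow> adj UF u v"
  by (auto simp: adj_graph_Union)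

lemma subgraph_UF: "subgraph UF G"
  using subgraph_F by (rule subgraph_graph_Union)

lemma adj_UF_G: "adj UF u v \<Longrightarrow> adj G u v"
  using subgraph_UF by (rule subgraph_adj)

lemma graph_UF: "graph UF"
  using subgraph_UF by (simp add: subgraph_def)

lemma verts_UF: "verts UF = verts G"
proof
  show "verts UF \<subseteq> verts G" using subgraph_UF by (simp add: subgraph_def)
  show "verts G \<subseteq> verts UF"
  proof
    fix v assume v: "v \<in> verts G"
    obtain a where a: "a \<in> V 0" using V_nonempty by blast
    have "a \<in> verts G" using a V_subset by blast
    then have "(adj G)\<^sup>*\<^sup>* a v" using connected_G v unfolding connected_graph_def by blast
    then show "v \<in> verts UF"
    proof (induction rule: rtranclp_induct)
      case base
      show ?case using a unfolding verts_graph_Union by blast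
    next
      case (step y z)
      then obtain i where i: "y \<in> V i" unfolding verts_graph_Union by blast
      show ?case
      proof (cases "z \<in> V i")
        case False
        then have "z \<in> V (Suc i)" using nbhdI[OF i step.hyps(2)] nbhd_F by blast
        then show ?thesis unfolding verts_graph_Union by blast
      qed (auto simp: verts_graph_Union)
    qed
  qed
qed

lemma finite_subset_V: "finite S \<Longrightarrow> S \<subseteq> verts G \<Longrightarrow> \<exists>i. S \<subseteq> V i"
  using finite_subset_Union_mono[OF mono_V] verts_UF by (simp add: verts_graph_Union)

lemma reaches_nbhd_component:
  assumes C: "component (del_verts G (V (Suc i))) C" and D: "nbhd G (verts C) \<subseteq> verts D"
    and D_comp: "component (del_verts (F (Suc i)) (V i)) D"
    and x: "x \<in> verts C" and S: "S \<subseteq> V i"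
  shows "\<exists>d\<in>verts D. (adj (del_verts UF S))\<^sup>*\<^sup>* x d"
proof -
  have C_verts: "verts C \<subseteq> verts G - V (Suc i)"
    using component_verts_subset[OF graph_del_verts[OF graph_G] C] by simp
  obtain m where m: "x \<in> V m" using x C_verts verts_UF by (auto simp: verts_graph_Union)
  obtain a where a: "a \<in> V (Suc i)" using V_nonempty by blast
  define M where "M = max m (Suc i)"
  have "x \<in> V M" "a \<in> V M"
    using m a monoD[OF mono_V, of m M] monoD[OF mono_V, of "Suc i" M] by (auto simp: M_def)
  then have "(adj (F M))\<^sup>*\<^sup>* x a" by (rule F_connected)
  moreover have "a \<notin> verts C" using a C_verts by blast
  ultimately obtain c d where
    path: "(\<lambda>u v. adj (F M) u v \<and> u \<in> verts C \<and> v \<in> verts C)\<^sup>*\<^sup>* x c"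
    and c: "c \<in> verts C" and cd: "adj (F M) c d" and d: "d \<notin> verts C"
    using rtranclp_exit[of "adj (F M)" x a "verts C"] x by blast
  have "d \<in> nbhd G (verts C)" using c d cd by (blast intro: nbhdI adj_F_UF adj_UF_G)
  then have d_D: "d \<in> verts D" using D by blast
  have S_C: "S \<inter> verts C = {}" using S C_verts V_Suc by blast
  have "d \<notin> V i"
    using d_D component_verts_subset[OF graph_del_verts[OF graph_F] D_comp] by auto
  have "(adj (del_verts UF S))\<^sup>*\<^sup>* x c"
    using path by (rule mono_rtranclp[rule_format, rotated])
      (use S_C in \<open>auto simp: adj_del_verts_iff intro: adj_F_UF\<close>)
  moreover have "adj (del_verts UF S) c d"
    using c cd S S_C \<open>d \<notin> V i\<close> by (auto simp: adj_del_verts_iff intro: adj_F_UF)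
  ultimately have "(adj (del_verts UF S))\<^sup>*\<^sup>* x d" by (rule rtranclp.rtrancl_into_rtrancl)
  then show ?thesis using d_D by blast
qed

lemma ray_equiv_UF_if_G:
  assumes r: "ray UF r" and s: "ray UF s" and rs: "ray_equiv G r s"
  shows "ray_equiv UF r s"
proof (rule ray_equivI[OF r s])
  fix S assume "finite S" "S \<subseteq> verts UF"
  then obtain i where S: "S \<subseteq> V i" using finite_subset_V[of S] verts_UF by auto
  obtain k where avoid: "\<forall>n\<ge>k. r n \<notin> V (Suc i) \<and> s n \<notin> V (Suc i)"
    and rs_k: "(adj (del_verts G (V (Suc i))))\<^sup>*\<^sup>* (r k) (s k)"
    using ray_equivD[OF rs finite_V V_subset] by blast
  let ?C = "component_at (del_verts G (V (Suc i))) (r k)"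
  have "r k \<in> verts G" using r verts_UF by (simp add: ray_def)
  then have C: "component (del_verts G (V (Suc i))) ?C"
    using avoid by (intro component_component_at) simp
  obtain D where D_comp: "component (del_verts (F (Suc i)) (V i)) D"
    and D: "nbhd G (verts ?C) \<subseteq> verts D"
    using nbhd_component[OF C] by blast
  have "r k \<in> verts ?C" "s k \<in> verts ?C" using rs_k by simp_all
  then obtain d d' where "d \<in> verts D" "(adj (del_verts UF S))\<^sup>*\<^sup>* (r k) d"
    and "d' \<in> verts D" "(adj (del_verts UF S))\<^sup>*\<^sup>* (s k) d'"
    using reaches_nbhd_component[OF C D D_comp _ S] by metis
  moreover have "(adj (del_verts UF S))\<^sup>*\<^sup>* d d'"
  proof -
    have "(adj (del_verts (F (Suc i)) (V i)))\<^sup>*\<^sup>* d d'"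
      using component_connected[OF D_comp] \<open>d \<in> verts D\<close> \<open>d' \<in> verts D\<close> by blast
    then show ?thesis
      by (rule mono_rtranclp[rule_format, rotated])
        (use S in \<open>auto simp: adj_del_verts_iff intro: adj_F_UF\<close>)
  qed
  ultimately have "(adj (del_verts UF S))\<^sup>*\<^sup>* (r k) (s k)"
    using symp_rtranclp[OF symp_adj] by (meson rtranclp_trans sympD)
  moreover have "\<forall>n\<ge>k. r n \<notin> S \<and> s n \<notin> S" using avoid S V_Suc by blast
  ultimately show "\<exists>k. (\<forall>n\<ge>k. r n \<notin> S \<and> s n \<notin> S) \<and> (adj (del_verts UF S))\<^sup>*\<^sup>* (r k) (s k)"
    by blast
qed

(* H i, tail_D i and gate i are the H_i, D_i and x_i of the proof sketch at the top. *)
context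
  fixes r assumes r: "ray G r"
begin

definition tail_start :: "nat \<Rightarrow> nat" where
  "tail_start i = (LEAST n. \<forall>m\<ge>n. r m \<notin> V (Suc i))"

definition tail_component :: "nat \<Rightarrow> 'a graph" where
  "tail_component i = component_at (del_verts G (V (Suc i))) (r (tail_start i))"

abbreviation H :: "nat \<Rightarrow> 'a set" where "H i \<equiv> verts (tail_component i)"

lemma tail_start_avoids: "tail_start i \<le> m \<Longrightarrow> r m \<notin> V (Suc i)"
proof -
  have "\<forall>m\<ge>tail_start i. r m \<notin> V (Suc i)"
    unfolding tail_start_def by (rule LeastI_ex) (rule ray_eventually_avoids[OF r finite_V])
  then show "tail_start i \<le> m \<Longrightarrow> r m \<notin> V (Suc i)" by blast
qed

lemma component_tail_component: "component (del_verts G (V (Suc i))) (tail_component i)"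
proof -
  have "r (tail_start i) \<in> verts G" using r by (simp add: ray_def)
  then show ?thesis
    unfolding tail_component_def using tail_start_avoids[of i]
    by (intro component_component_at) simp
qed

lemma H_subset: "H i \<subseteq> verts G - V (Suc i)"
  using component_verts_subset[OF graph_del_verts[OF graph_G] component_tail_component] by simp

lemma ray_in_H: "tail_start i \<le> n \<Longrightarrow> r n \<in> H i"
  using component_tail[OF component_tail_component, of r "tail_start i"] r tail_start_avoids
  by (auto simp: tail_component_def ray_def adj_del_verts_iff)

lemma antimono_H: "antimono H"
  unfolding antimono_iff_le_Suc
proof (intro allI subsetI)
  fix i w assume w: "w \<in> H (Suc i)"
  define n where "n = max (tail_start i) (tail_start (Suc i))"
  have n: "r n \<in> H i" "r n \<in> H (Suc i)" using ray_in_H n_def by simp_all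
  have "(adj (del_verts G (V (Suc (Suc i)))))\<^sup>*\<^sup>* (r n) w"
    using component_connected[OF component_tail_component] n(2) w by blast
  then have "(adj (del_verts G (V (Suc i))))\<^sup>*\<^sup>* (r n) w"
    by (rule mono_rtranclp[rule_format, rotated]) (use V_Suc in \<open>auto simp: adj_del_verts_iff\<close>)
  then show "w \<in> H i" using component_reach_closed[OF component_tail_component n(1)] by blast
qed

lemma nbhd_H_nonempty: "nbhd G (H i) \<noteq> {}"
proof -
  obtain a where a: "a \<in> V (Suc i)" using V_nonempty by blast
  let ?x = "r (tail_start i)"
  have x: "?x \<in> H i" by (rule ray_in_H[OF order_refl])
  have "?x \<in> verts G" "a \<in> verts G" using r a V_subset by (auto simp: ray_def)
  then have "(adj G)\<^sup>*\<^sup>* ?x a" using connected_G unfolding connected_graph_def by blast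
  moreover have "a \<notin> H i" using a H_subset by blast
  ultimately obtain b c where "b \<in> H i" "adj G b c" "c \<notin> H i"
    using rtranclp_exit[of "adj G" ?x a "H i"] x by blast
  then have "c \<in> nbhd G (H i)" by (rule nbhdI)
  then show ?thesis by blast
qed

definition tail_D :: "nat \<Rightarrow> 'a graph" where
  "tail_D i = (SOME D. component (del_verts (F (Suc i)) (V i)) D \<and> nbhd G (H i) \<subseteq> verts D)"

lemma tail_D: "component (del_verts (F (Suc i)) (V i)) (tail_D i)" "nbhd G (H i) \<subseteq> verts (tail_D i)"
  using someI_ex[OF nbhd_component[OF component_tail_component]] by (simp_all add: tail_D_def)

definition gate :: "nat \<Rightarrow> 'a" where
  "gate i = (SOME x. x \<in> nbhd G (H i))"

lemma gate_nbhd: "gate i \<in> nbhd G (H i)"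
  using nbhd_H_nonempty some_in_eq unfolding gate_def by blast

lemma gate_in_D: "gate i \<in> verts (tail_D i)"
  using gate_nbhd tail_D(2) by blast

lemma gate_V: "gate i \<in> V (Suc i) - V i"
proof -
  have "verts (tail_D i) \<subseteq> V (Suc i) - V i"
    using component_verts_subset[OF graph_del_verts[OF graph_F] tail_D(1)] by simp
  then show ?thesis using gate_in_D by blast
qed

lemma gate_Suc_in_H: "gate (Suc i) \<in> H i"
proof -
  obtain h where h: "h \<in> H (Suc i)" "adj G h (gate (Suc i))"
    using gate_nbhd[of "Suc i"] by (auto simp: nbhd_def)
  have h_H: "h \<in> H i" using h(1) antimono_H by (auto simp: antimono_iff_le_Suc)
  then have "adj (del_verts G (V (Suc i))) h (gate (Suc i))"
    using h(2) gate_V[of "Suc i"] H_subset by (auto simp: adj_del_verts_iff)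
  then show ?thesis using component_reach_closed[OF component_tail_component h_H] by blast
qed

lemma tail_D_Suc_subset_H: "verts (tail_D (Suc i)) \<subseteq> H i"
proof
  fix y assume "y \<in> verts (tail_D (Suc i))"
  then have "(adj (del_verts (F (Suc (Suc i))) (V (Suc i))))\<^sup>*\<^sup>* (gate (Suc i)) y"
    using component_connected[OF tail_D(1)] gate_in_D by blast
  then have "(adj (del_verts G (V (Suc i))))\<^sup>*\<^sup>* (gate (Suc i)) y"
    by (rule mono_rtranclp[rule_format, rotated])
      (auto simp: adj_del_verts_iff intro: subgraph_adj[OF subgraph_F])
  then show "y \<in> H i" using component_reach_closed[OF component_tail_component gate_Suc_in_H] by blast
qed

lemma tail_D_Suc_connected_in_H:
  assumes "u \<in> verts (tail_D (Suc j))" and "v \<in> verts (tail_D (Suc j))"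
  shows "(\<lambda>u v. adj UF u v \<and> u \<in> H j \<and> v \<in> H j)\<^sup>*\<^sup>* u v"
proof -
  have "(adj (del_verts (F (Suc (Suc j))) (V (Suc j))))\<^sup>*\<^sup>* u v"
    using component_connected[OF tail_D(1) assms] .
  then have "(\<lambda>a b. adj (del_verts (F (Suc (Suc j))) (V (Suc j))) a b
      \<and> a \<in> verts (tail_D (Suc j)) \<and> b \<in> verts (tail_D (Suc j)))\<^sup>*\<^sup>* u v"
    using component_rtranclp_within[OF tail_D(1)] assms(1) by blast
  then show ?thesis
    by (rule mono_rtranclp[rule_format, rotated])
      (use tail_D_Suc_subset_H in \<open>auto simp: adj_del_verts_iff intro: adj_F_UF\<close>)
qed

(* An F-path from x_(j+2) in H_(j+1) to x_(j+1) outside it leaves H_(j+1) into D_(j+1). *)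
lemma gate_link:
  "(\<lambda>u v. adj UF u v \<and> u \<in> H j \<and> v \<in> H j)\<^sup>+\<^sup>+ (gate (Suc j)) (gate (Suc (Suc j)))"
proof -
  let ?R = "\<lambda>u v. adj UF u v \<and> u \<in> H j \<and> v \<in> H j"
  let ?x = "gate (Suc (Suc j))" and ?y = "gate (Suc j)"
  have H_Suc: "H (Suc j) \<subseteq> H j" using antimono_H by (simp add: antimono_iff_le_Suc)
  have x: "?x \<in> H (Suc j)" by (rule gate_Suc_in_H)
  have y: "?y \<notin> H (Suc j)" using gate_V[of "Suc j"] H_subset[of "Suc j"] by blast
  have "?x \<in> V (Suc (Suc (Suc j)))" "?y \<in> V (Suc (Suc (Suc j)))"
    using gate_V[of "Suc (Suc j)"] gate_V[of "Suc j"] V_Suc[of "Suc (Suc j)"] by auto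
  then have "(adj (F (Suc (Suc (Suc j)))))\<^sup>*\<^sup>* ?x ?y" by (rule F_connected)
  then obtain a b where
    path: "(\<lambda>u v. adj (F (Suc (Suc (Suc j)))) u v \<and> u \<in> H (Suc j) \<and> v \<in> H (Suc j))\<^sup>*\<^sup>* ?x a"
    and a: "a \<in> H (Suc j)" and ab: "adj (F (Suc (Suc (Suc j)))) a b" and b: "b \<notin> H (Suc j)"
    using rtranclp_exit[of "adj (F (Suc (Suc (Suc j))))" ?x ?y "H (Suc j)"] x y by blast
  have "b \<in> nbhd G (H (Suc j))" by (rule nbhdI[OF a adj_UF_G[OF adj_F_UF[OF ab]] b])
  then have b_D: "b \<in> verts (tail_D (Suc j))" using tail_D(2) by blast
  have "?R\<^sup>*\<^sup>* ?x a"
    using path by (rule mono_rtranclp[rule_format, rotated]) (use H_Suc in \<open>auto intro: adj_F_UF\<close>)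
  moreover have "?R a b"
    using a ab b_D H_Suc tail_D_Suc_subset_H by (auto intro: adj_F_UF)
  moreover have "?R\<^sup>*\<^sup>* b ?y"
    using tail_D_Suc_connected_in_H[OF b_D gate_in_D] .
  ultimately have "?R\<^sup>*\<^sup>* ?x ?y" by (blast intro: rtranclp.rtrancl_into_rtrancl rtranclp_trans)
  moreover have "symp ?R\<^sup>*\<^sup>*" by (intro symp_rtranclp) (auto simp: symp_def adj_commute)
  ultimately have "?R\<^sup>*\<^sup>* ?y ?x" by (rule sympD[rotated])
  moreover have "?y \<noteq> ?x" using x y by auto
  ultimately show ?thesis by (auto dest: rtranclpD)
qed

definition link :: "nat \<Rightarrow> 'a list" where
  "link j = (SOME l. l \<noteq> [] \<and> hd l = gate (Suc j) \<and>
     successively (\<lambda>u v. adj UF u v \<and> u \<in> H j \<and> v \<in> H j) (l @ [gate (Suc (Suc j))]))"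

lemma link:
  "link j \<noteq> []" "hd (link j) = gate (Suc j)"
  "successively (\<lambda>u v. adj UF u v \<and> u \<in> H j \<and> v \<in> H j) (link j @ [gate (Suc (Suc j))])"
  using someI_ex[OF tranclp_imp_successively[OF gate_link]] unfolding link_def by blast+

lemma set_link: "set (link j) \<subseteq> H j"
  using successively_within_set[OF link(3)] link(1,2) gate_Suc_in_H by simp

definition walk :: "'a stream" where
  "walk = flat (smap link nats)"

lemma adj_walk: "adj UF (walk !! n) (walk !! Suc n)"
  unfolding walk_def
proof (rule snth_flat_successively)
  show "smap link nats !! n \<noteq> []" for n using link(1) by simp
  show "successively (adj UF) (smap link nats !! n @ [hd (smap link nats !! Suc n)])" for n
    using link(3)[of n] link(2)[of "Suc n"] by (auto elim: successively_mono)
qed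

lemma walk_eventually_in_H: "\<exists>n0. \<forall>n\<ge>n0. walk !! n \<in> H j"
proof -
  have "smap link nats !! n \<noteq> []" for n using link(1) by simp
  then obtain n0 where n0: "\<forall>n\<ge>n0. \<exists>k\<ge>j. walk !! n \<in> set (smap link nats !! k)"
    unfolding walk_def by (metis snth_flat_eventually)
  have "walk !! n \<in> H j" if n: "n0 \<le> n" for n
  proof -
    obtain k where k: "j \<le> k" "walk !! n \<in> set (link k)" using n0 n by auto
    have "H k \<subseteq> H j" using antimono_H k(1) by (simp add: antimono_def)
    then show ?thesis using set_link[of k] k(2) by blast
  qed
  then show ?thesis by blast
qed

lemma finite_walk_visits: "finite {n. walk !! n = v}"
proof -
  obtain i where i: "v \<notin> H i"
  proof (cases "v \<in> verts G")
    case True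
    then obtain i where "v \<in> V i" using verts_UF by (auto simp: verts_graph_Union)
    then have "v \<notin> H i" using H_subset[of i] V_Suc[of i] by blast
    then show thesis by (rule that)
  next
    case False
    then show thesis using that[of 0] H_subset[of 0] by blast
  qed
  obtain n0 where "\<forall>n\<ge>n0. walk !! n \<in> H i" using walk_eventually_in_H by blast
  then have "{n. walk !! n = v} \<subseteq> {..<n0}" using i by (auto simp: not_less[symmetric])
  then show ?thesis by (rule finite_subset) simp
qed

lemma exists_ray_UF_equiv: "\<exists>s. ray UF s \<and> ray_equiv G r s"
proof -
  obtain s where s: "ray UF s" "\<forall>k. \<exists>n\<ge>k. s k = walk !! n"
    using ray_of_walk[OF graph_UF adj_walk finite_walk_visits] by blast
  have s_H: "\<exists>k0. \<forall>k\<ge>k0. s k \<in> H j" for j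
  proof -
    obtain n0 where "\<forall>n\<ge>n0. walk !! n \<in> H j" using walk_eventually_in_H by blast
    then have "\<forall>k\<ge>n0. s k \<in> H j" using s(2) by (metis order_trans)
    then show ?thesis by blast
  qed
  have "ray_equiv G r s"
  proof (rule ray_equivI[OF r ray_subgraph[OF subgraph_UF s(1)]])
    fix S assume "finite S" "S \<subseteq> verts G"
    then obtain i where S: "S \<subseteq> V i" using finite_subset_V by blast
    obtain k0 where k0: "\<forall>k\<ge>k0. s k \<in> H i" using s_H by blast
    define k where "k = max k0 (tail_start i)"
    have in_H: "r n \<in> H i" "s n \<in> H i" if "k \<le> n" for n
      using that ray_in_H k0 by (simp_all add: k_def)
    then have "\<forall>n\<ge>k. r n \<notin> S \<and> s n \<notin> S" using S V_Suc[of i] H_subset[of i] by blast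
    moreover have "(adj (del_verts G (V (Suc i))))\<^sup>*\<^sup>* (r k) (s k)"
      using component_connected[OF component_tail_component] in_H by blast
    then have "(adj (del_verts G S))\<^sup>*\<^sup>* (r k) (s k)"
      by (rule mono_rtranclp[rule_format, rotated]) (use S V_Suc in \<open>auto simp: adj_del_verts_iff\<close>)
    ultimately show "\<exists>k. (\<forall>n\<ge>k. r n \<notin> S \<and> s n \<notin> S) \<and> (adj (del_verts G S))\<^sup>*\<^sup>* (r k) (s k)"
      by blast
  qed
  then show ?thesis using s(1) by blast
qed

end

end

theorem lemma12:
  fixes G :: "'a graph" and F :: "nat \<Rightarrow> 'a graph"
  assumes "graph G" and "infinite (verts G)" and "locally_finite G" and "connected_graph G"
    and "\<And>i. subgraph (F i) G" and "\<And>i. finite_graph (F i)" and "\<And>i. connected_graph (F i)"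
    and "\<And>i. subgraph (F i) (F (Suc i))"
    and "\<And>i. nbhd G (verts (F i)) \<subseteq> verts (F (Suc i))"
    and "\<And>i H. component (del_verts G (verts (F (Suc i)))) H \<Longrightarrow>
           \<exists>D. component (del_verts (F (Suc i)) (verts (F i))) D \<and> nbhd G (verts H) \<subseteq> verts D"
  shows "spanning_subgraph (graph_Union F) G \<and> faithful (graph_Union F) G"
proof -
  interpret exhausting_sequence G F
    using assms(1,4-10) by unfold_locales
  have spanning: "spanning_subgraph UF G"
    using subgraph_UF verts_UF by (simp add: spanning_subgraph_def)
  have "ray_equiv UF r s \<longleftrightarrow> ray_equiv G r s" if "ray UF r" "ray UF s" for r s
    using ray_equiv_spanning_subgraph[OF spanning] ray_equiv_UF_if_G that by blast
  then show ?thesis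
    unfolding faithful_def using spanning subgraph_UF exists_ray_UF_equiv by blast
qed

end
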